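(* For each $n\geq 2$ there is a domain $D$ in $\mathbb{R}^n$ such that $\mathbb{R}^n\setminus D$ contains at least two points and there exists $z\in D$ with $$\lambda''_D(z)<\lambda'_D(z)<\lambda_D(z).$$
   Context: Write $d(z,\partial D)=\inf\{|z-a|:a\in\partial D\}$ and $Q(z;a,b)=|z-a|\big(1+\big|\log\frac{|a-b|}{|z-a|}\big|\big)$ (equal to $+\infty$ when $a=b$). For a domain $D\subset\mathbb{R}^n$ whose complement contains at least two points and $z\in D$ define $1/\lambda_D(z)=\inf\{Q(z;a,b): a,b\in\mathbb{R}^n\setminus D\}$, $1/\lambda'_D(z)=\inf\{Q(z;a,b): a,b\in\partial D\}$, $1/\lambda''_D(z)=\inf\{Q(z;a,b): a,b\in\partial D,\ |z-a|=d(z,\partial D)\}$. *)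

theory Defs
  imports "HOL-Analysis.Analysis"
begin

definition is_domain :: "'a::topological_space set \<Rightarrow> bool" where
  "is_domain D \<longleftrightarrow> open D \<and> connected D \<and> D \<noteq> {}"

definition Qfun :: "'a::real_normed_vector \<Rightarrow> 'a \<Rightarrow> 'a \<Rightarrow> ereal" where
  "Qfun z a b = (if a = b then \<infinity>
     else ereal (dist z a * (1 + \<bar>ln (dist a b / dist z a)\<bar>)))"

text \<open>The reciprocals 1/lambda, 1/lambda', 1/lambda'' as infima (in the extended reals).\<close>
definition inv_lam :: "'a::real_normed_vector set \<Rightarrow> 'a \<Rightarrow> ereal" where
  "inv_lam D z = (INF p \<in> {(a,b). a \<in> - D \<and> b \<in> - D}. Qfun z (fst p) (snd p))"

definition inv_lam' :: "'a::real_normed_vector set \<Rightarrow> 'a \<Rightarrow> ereal" where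
  "inv_lam' D z = (INF p \<in> {(a,b). a \<in> frontier D \<and> b \<in> frontier D}. Qfun z (fst p) (snd p))"

definition inv_lam'' :: "'a::real_normed_vector set \<Rightarrow> 'a \<Rightarrow> ereal" where
  "inv_lam'' D z = (INF p \<in> {(a,b). a \<in> frontier D \<and> b \<in> frontier D
        \<and> dist z a = infdist z (frontier D)}. Qfun z (fst p) (snd p))"

definition lam :: "'a::real_normed_vector set \<Rightarrow> 'a \<Rightarrow> ereal" where
  "lam D z = 1 / inv_lam D z"

definition lam' :: "'a::real_normed_vector set \<Rightarrow> 'a \<Rightarrow> ereal" where
  "lam' D z = 1 / inv_lam' D z"

definition lam'' :: "'a::real_normed_vector set \<Rightarrow> 'a \<Rightarrow> ereal" where
  "lam'' D z = 1 / inv_lam'' D z"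

end

theory Submission
  imports Defs
begin

text \<open>Take \<open>|c| = 1\<close>, let \<open>D\<close> be the complement of the closed ball \<open>B(c, 1/5)\<close> and of
  the point \<open>2c\<close>, and put \<open>z = 0\<close>; then \<open>\<partial>D\<close> is the sphere \<open>S(c, 1/5)\<close> together with \<open>2c\<close>.
  The exterior pair \<open>(c, 2c)\<close> has \<open>Q = 1\<close>, so \<open>1/\<lambda> \<le> 1\<close>. For boundary pairs the bounds
  \<open>|log s| \<ge> 1 - s\<close> and \<open>|log s| \<ge> 1 - 1/s\<close> give \<open>Q \<ge> 101/100\<close>, while a point \<open>a\<close> of the
  sphere equidistant from \<open>0\<close> and \<open>2c\<close> (it exists as \<open>n \<ge> 2\<close>) gives \<open>Q(0; a, 2c) = |a| < 102/100\<close>.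
  Finally the boundary points nearest to \<open>0\<close> have norm \<open>4/5\<close>, and every pair starting at
  one of them has \<open>Q \<ge> 16/15\<close>. Hence \<open>1/\<lambda> < 1/\<lambda>' < 1/\<lambda>''\<close>.\<close>

lemma ln_ge_one_minus_inverse:
  fixes t :: real
  assumes "0 < t"
  shows "1 - 1 / t \<le> ln t"
  using ln_le_minus_one[of "1 / t"] assms by (simp add: ln_div)

lemma Qfun_ge_dist: "ereal (dist z a) \<le> Qfun z a b"
  by (simp add: Qfun_def mult_le_cancel_left1)

lemma Qfun_nonneg: "0 \<le> Qfun z a b"
  by (simp add: Qfun_def)

lemma Qfun_eq_dist:
  assumes "a \<noteq> b" "dist a b = dist z a"
  shows "Qfun z a b = ereal (dist z a)"
  using assms by (simp add: Qfun_def)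

text \<open>Both bounds come from \<open>ln t \<ge> 1 - 1/t\<close>, applied to \<open>t = |z - a| / |a - b|\<close> and to
  its reciprocal.\<close>
lemma Qfun_ge_two_dist_diff: "ereal (2 * dist z a - dist a b) \<le> Qfun z a b"
  and Qfun_ge_dist_mult: "ereal (dist z a * (2 - dist z a / dist a b)) \<le> Qfun z a b"
proof -
  have "ereal (2 * dist z a - dist a b) \<le> Qfun z a b
    \<and> ereal (dist z a * (2 - dist z a / dist a b)) \<le> Qfun z a b"
  proof (cases "a = b \<or> z = a")
    case True
    then show ?thesis
      by (auto simp: Qfun_def)
  next
    case False
    define L where "L = ln (dist a b / dist z a)"
    have pos: "0 < dist z a" "0 < dist a b"
      using False by auto
    have "1 - dist a b / dist z a \<le> \<bar>L\<bar>"
      using ln_ge_one_minus_inverse[of "dist z a / dist a b"] pos by (simp add: L_def ln_div)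
    moreover have "1 - dist z a / dist a b \<le> \<bar>L\<bar>"
      using ln_ge_one_minus_inverse[of "dist a b / dist z a"] pos by (simp add: L_def)
    ultimately have "dist z a * (1 - dist a b / dist z a) \<le> dist z a * \<bar>L\<bar>"
      and "dist z a * (1 - dist z a / dist a b) \<le> dist z a * \<bar>L\<bar>"
      using pos by (auto intro!: mult_left_mono)
    then show ?thesis
      using False pos by (simp add: Qfun_def L_def algebra_simps)
  qed
  then show "ereal (2 * dist z a - dist a b) \<le> Qfun z a b"
    and "ereal (dist z a * (2 - dist z a / dist a b)) \<le> Qfun z a b"
    by auto
qed

lemma apollonius_norm:
  fixes a m :: "'a::real_inner"
  shows "(norm a)\<^sup>2 + (norm (a - 2 *\<^sub>R m))\<^sup>2 = 2 * (norm (a - m))\<^sup>2 + 2 * (norm m)\<^sup>2"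
  by (simp add: power2_norm_eq_inner algebra_simps inner_commute)

lemma circle_arc_estimate:
  fixes \<alpha> \<beta> :: real
  assumes "4/5 \<le> \<alpha>" "\<alpha> < 101/100" "0 < \<beta>" "\<alpha>\<^sup>2 + \<beta>\<^sup>2 = 52/25"
  shows "101/100 \<le> \<alpha> * (2 - \<alpha> / \<beta>)"
proof -
  \<comment> \<open>On each of the two subintervals bound \<open>\<beta>\<close> from below by its value at the right end;
    what is left is a quadratic in \<open>\<alpha>\<close> that is nonpositive there.\<close>
  have "101/100 * \<beta> \<le> \<alpha> * (2 * \<beta> - \<alpha>)"
  proof (cases "\<alpha> \<le> 92/100")
    case True
    have "\<alpha> * \<alpha> \<le> 92/100 * (92/100)"
      using True assms by (intro mult_mono) auto
    then have "(11/10)\<^sup>2 \<le> \<beta>\<^sup>2"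
      using assms by (simp add: power2_eq_square)
    then have "11/10 \<le> \<beta>"
      using assms by (simp add: power_mono_iff)
    then have "11/10 * (2 * \<alpha> - 101/100) \<le> \<beta> * (2 * \<alpha> - 101/100)"
      using assms by (intro mult_right_mono) auto
    moreover have "(\<alpha> - 4/5) * (\<alpha> - 14/10) \<le> 0"
      using assms True by (intro mult_nonneg_nonpos) auto
    ultimately show ?thesis
      using assms by (simp add: algebra_simps power2_eq_square)
  next
    case False
    have "\<alpha> * \<alpha> \<le> 101/100 * (101/100)"
      using False assms by (intro mult_mono) auto
    then have "(102/100)\<^sup>2 \<le> \<beta>\<^sup>2"
      using assms by (simp add: power2_eq_square)
    then have "102/100 \<le> \<beta>"
      using assms by (simp add: power_mono_iff)
    then have "102/100 * (2 * \<alpha> - 101/100) \<le> \<beta> * (2 * \<alpha> - 101/100)"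
      using assms by (intro mult_right_mono) auto
    moreover have "(\<alpha> - 92/100) * (\<alpha> - 112/100) \<le> 0"
      using assms False by (intro mult_nonneg_nonpos) auto
    ultimately show ?thesis
      using assms by (simp add: algebra_simps power2_eq_square)
  qed
  then show ?thesis
    using assms by (simp add: field_simps)
qed

definition compl_ball_point :: "'a::real_normed_vector \<Rightarrow> 'a set" where
  "compl_ball_point c = - (cball c (1/5) \<union> {2 *\<^sub>R c})"

context
  fixes c :: "'a::real_inner"
  assumes norm_c: "norm c = 1"
begin

lemma dist_double: "dist c (2 *\<^sub>R c) = 1"
  using norm_c by (simp add: dist_norm scaleR_2)

lemma zero_mem_compl_ball_point: "0 \<in> compl_ball_point c"
  using norm_c by (auto simp: compl_ball_point_def)

lemma norm_ge_on_sphere: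
  assumes "a \<in> sphere c (1/5)"
  shows "4/5 \<le> norm a"
  using norm_triangle_ineq2[of c a] assms norm_c by (simp add: dist_norm)

lemma double_notin_sphere: "2 *\<^sub>R c \<notin> sphere c (1/5)"
  using dist_double by simp

lemma sphere_norm_sq_add_dist_sq:
  assumes "a \<in> sphere c (1/5)"
  shows "(norm a)\<^sup>2 + (dist a (2 *\<^sub>R c))\<^sup>2 = 52/25"
proof -
  have "norm (a - c) = 1/5"
    using assms by (simp add: dist_norm norm_minus_commute)
  with apollonius_norm[of a c] show ?thesis
    unfolding norm_c by (simp add: dist_norm power2_eq_square)
qed

lemma Qfun_sphere_pair_ge:
  assumes "a \<in> sphere c (1/5)" "b \<in> sphere c (1/5)"
  shows "ereal (2 * norm a - 2/5) \<le> Qfun 0 a b"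
proof -
  have "dist a b \<le> 2/5"
    using dist_triangle[of a b c] assms by (simp add: dist_commute)
  then have "2 * norm a - 2/5 \<le> 2 * dist 0 a - dist a b"
    by simp
  then show ?thesis
    by (rule ereal_le_le[OF Qfun_ge_two_dist_diff])
qed

lemma Qfun_sphere_double_ge:
  assumes a: "a \<in> sphere c (1/5)"
  shows "ereal (101/100) \<le> Qfun 0 a (2 *\<^sub>R c)"
proof (cases "101/100 \<le> norm a")
  case True
  then show ?thesis
    by (intro ereal_le_le[OF Qfun_ge_dist]) simp
next
  case False
  have "0 < dist a (2 *\<^sub>R c)"
    using a double_notin_sphere by auto
  then have "101/100 \<le> norm a * (2 - norm a / dist a (2 *\<^sub>R c))"
    using circle_arc_estimate norm_ge_on_sphere[OF a] False sphere_norm_sq_add_dist_sq[OF a]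
    by simp
  then show ?thesis
    by (intro ereal_le_le[OF Qfun_ge_dist_mult]) simp
qed

lemma Qfun_center_double: "Qfun 0 c (2 *\<^sub>R c) = 1"
proof -
  have "c \<noteq> 2 *\<^sub>R c"
    using dist_double by auto
  then show ?thesis
    using Qfun_eq_dist[of c "2 *\<^sub>R c" 0] dist_double norm_c by (simp add: one_ereal_def)
qed

lemma Qfun_boundary_pair_ge:
  assumes a: "a \<in> sphere c (1/5) \<union> {2 *\<^sub>R c}" and b: "b \<in> sphere c (1/5) \<union> {2 *\<^sub>R c}"
  shows "ereal (101/100) \<le> Qfun 0 a b"
proof -
  consider "a = b" | "a = 2 *\<^sub>R c" | "a \<in> sphere c (1/5)" "b = 2 *\<^sub>R c"
    | "a \<in> sphere c (1/5)" "b \<in> sphere c (1/5)"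
    using a b by blast
  then show ?thesis
  proof cases
    case 1
    then show ?thesis
      by (simp add: Qfun_def)
  next
    case 2
    then show ?thesis
      using norm_c by (intro ereal_le_le[OF Qfun_ge_dist]) simp
  next
    case 3
    then show ?thesis
      using Qfun_sphere_double_ge by simp
  next
    case 4
    then have "4/5 \<le> norm a"
      by (intro norm_ge_on_sphere)
    with 4 show ?thesis
      by (intro ereal_le_le[OF Qfun_sphere_pair_ge]) auto
  qed
qed

lemma Qfun_nearest_boundary_pair_ge:
  assumes a: "a \<in> sphere c (1/5)" and b: "b \<in> sphere c (1/5) \<union> {2 *\<^sub>R c}"
    and norm_a: "norm a = 4/5"
  shows "ereal (16/15) \<le> Qfun 0 a b"
proof -
  consider "b = 2 *\<^sub>R c" | "b \<in> sphere c (1/5)"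
    using b by blast
  then show ?thesis
  proof cases
    case 1
    have "(dist a (2 *\<^sub>R c))\<^sup>2 = (6/5)\<^sup>2"
      using sphere_norm_sq_add_dist_sq[OF a] norm_a by (simp add: power2_eq_square)
    then have dist_ab: "dist a b = 6/5"
      using 1 by (simp add: power2_eq_iff_nonneg)
    show ?thesis
      by (intro ereal_le_le[OF Qfun_ge_dist_mult]) (simp add: norm_a dist_ab)
  next
    case 2
    then show ?thesis
      using a norm_a by (intro ereal_le_le[OF Qfun_sphere_pair_ge]) auto
  qed
qed

lemma Qfun_orthogonal_point_less:
  assumes "norm e = 1" "c \<bullet> e = 0"
  shows "Qfun 0 (c + (1/5) *\<^sub>R e) (2 *\<^sub>R c) < ereal (102/100)"
proof -
  define a where "a = c + (1/5) *\<^sub>R e"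
  have norm_a: "(norm a)\<^sup>2 = 26/25" and norm_a_double: "(norm (a - 2 *\<^sub>R c))\<^sup>2 = 26/25"
    using assms norm_c
    by (simp_all add: a_def power2_norm_eq_inner algebra_simps inner_commute norm_eq_1)
  have "norm (a - 2 *\<^sub>R c) = norm a"
    by (rule power2_eq_imp_eq) (simp_all only: norm_a norm_a_double norm_ge_zero)
  then have "dist a (2 *\<^sub>R c) = dist 0 a"
    by (simp add: dist_norm)
  moreover have "norm a < 102/100"
    using power_less_imp_less_base[of "norm a" 2 "102/100"] norm_a
    by (simp add: power2_eq_square)
  moreover have "a \<noteq> 2 *\<^sub>R c"
    using norm_a_double by auto
  ultimately show ?thesis
    using Qfun_eq_dist[of a "2 *\<^sub>R c" 0] by (simp add: a_def)
qed

end

lemma ereal_one_div_strict_antimono: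
  fixes x y :: ereal
  assumes "0 \<le> x" "x < y"
  shows "1 / y < 1 / x"
  using ereal_inverse_antimono_strict[OF assms] by (simp add: divide_ereal_def)

lemma inv_lam_nonneg: "0 \<le> inv_lam D z"
  unfolding inv_lam_def by (rule INF_greatest) (rule Qfun_nonneg)

lemma frontier_cball_Un_point:
  fixes c q :: "'a::{real_normed_vector, perfect_space}"
  assumes "q \<notin> ball c r"
  shows "frontier (cball c r \<union> {q}) = sphere c r \<union> {q}"
proof -
  have "interior (cball c r \<union> {q}) = ball c r"
    using interior_closed_Un_empty_interior[of "cball c r" "{q}"] by simp
  then show ?thesis
    using assms by (auto simp: frontier_def closure_Un)
qed

context
  fixes c :: "'a::euclidean_space"
  assumes norm_c: "norm c = 1"
begin

lemma frontier_compl_ball_point: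
  "frontier (compl_ball_point c) = sphere c (1/5) \<union> {2 *\<^sub>R c}"
  unfolding compl_ball_point_def frontier_complement
  using dist_double[OF norm_c] by (intro frontier_cball_Un_point) simp

lemma is_domain_compl_ball_point:
  assumes "2 \<le> DIM('a)"
  shows "is_domain (compl_ball_point c)"
proof -
  have "connected (- cball c (1/5))"
    using assms by (intro connected_complement_bounded_convex) auto
  then have "connected (- cball c (1/5) - {2 *\<^sub>R c})"
    using assms by (intro connected_open_delete) auto
  moreover have "compl_ball_point c = - cball c (1/5) - {2 *\<^sub>R c}"
    by (auto simp: compl_ball_point_def)
  ultimately have "connected (compl_ball_point c)"
    by simp
  moreover have "open (compl_ball_point c)"
    by (auto simp: compl_ball_point_def)
  ultimately show ?thesis
    using zero_mem_compl_ball_point[OF norm_c] by (auto simp: is_domain_def)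
qed

lemma inv_lam_compl_ball_point_le: "inv_lam (compl_ball_point c) 0 \<le> 1"
proof -
  have "inv_lam (compl_ball_point c) 0 \<le> Qfun 0 c (2 *\<^sub>R c)"
    unfolding inv_lam_def by (rule INF_lower2[of "(c, 2 *\<^sub>R c)"]) (auto simp: compl_ball_point_def)
  then show ?thesis
    by (simp add: Qfun_center_double[OF norm_c])
qed

lemma inv_lam'_compl_ball_point_ge: "ereal (101/100) \<le> inv_lam' (compl_ball_point c) 0"
  unfolding inv_lam'_def frontier_compl_ball_point
  by (rule INF_greatest) (auto intro: Qfun_boundary_pair_ge[OF norm_c])

lemma inv_lam'_compl_ball_point_less:
  assumes "norm e = 1" "c \<bullet> e = 0"
  shows "inv_lam' (compl_ball_point c) 0 < ereal (102/100)"
proof -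
  have "c + (1/5) *\<^sub>R e \<in> sphere c (1/5)"
    using assms by (simp add: dist_norm)
  then have "inv_lam' (compl_ball_point c) 0 \<le> Qfun 0 (c + (1/5) *\<^sub>R e) (2 *\<^sub>R c)"
    unfolding inv_lam'_def frontier_compl_ball_point
    by (intro INF_lower2[of "(c + (1/5) *\<^sub>R e, 2 *\<^sub>R c)"]) auto
  also have "\<dots> < ereal (102/100)"
    using Qfun_orthogonal_point_less[OF norm_c assms] .
  finally show ?thesis .
qed

lemma inv_lam''_compl_ball_point_ge: "ereal (16/15) \<le> inv_lam'' (compl_ball_point c) 0"
proof -
  let ?F = "frontier (compl_ball_point c)"
  have "dist c ((4/5) *\<^sub>R c) = norm ((1 - 4/5) *\<^sub>R c)"
    by (simp only: dist_norm scaleR_diff_left scaleR_one)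
  then have "(4/5) *\<^sub>R c \<in> sphere c (1/5)"
    using norm_c by simp
  then have "infdist 0 ?F \<le> 4/5"
    using infdist_le[of "(4/5) *\<^sub>R c" ?F 0] norm_c by (simp add: frontier_compl_ball_point)
  moreover have "4/5 \<le> norm a" if "a \<in> ?F" for a
    using that norm_c norm_ge_on_sphere[OF norm_c] by (auto simp: frontier_compl_ball_point)
  ultimately have nearest: "a \<in> sphere c (1/5) \<and> norm a = 4/5"
    if "a \<in> ?F" "dist 0 a = infdist 0 ?F" for a
    using that norm_c by (force simp: frontier_compl_ball_point)
  show ?thesis
    unfolding inv_lam''_def
  proof (rule INF_greatest, clarify)
    fix a b
    assume "a \<in> ?F" "b \<in> ?F" "dist 0 a = infdist 0 ?F"
    then have "a \<in> sphere c (1/5)" "norm a = 4/5" "b \<in> sphere c (1/5) \<union> {2 *\<^sub>R c}"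
      using nearest frontier_compl_ball_point by auto
    then show "ereal (16/15) \<le> Qfun 0 (fst (a, b)) (snd (a, b))"
      using Qfun_nearest_boundary_pair_ge[OF norm_c] by simp
  qed
qed

lemma lam_strict_chain_compl_ball_point:
  assumes "norm e = 1" "c \<bullet> e = 0"
  shows "lam'' (compl_ball_point c) 0 < lam' (compl_ball_point c) 0
    \<and> lam' (compl_ball_point c) 0 < lam (compl_ball_point c) 0"
proof -
  let ?D = "compl_ball_point c"
  have "inv_lam ?D 0 \<le> 1"
    by (rule inv_lam_compl_ball_point_le)
  also have "\<dots> < ereal (101/100)"
    by simp
  also have "\<dots> \<le> inv_lam' ?D 0"
    by (rule inv_lam'_compl_ball_point_ge)
  finally have inv_lam_less: "inv_lam ?D 0 < inv_lam' ?D 0" .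
  have "inv_lam' ?D 0 < ereal (102/100)"
    using inv_lam'_compl_ball_point_less[OF assms] .
  also have "\<dots> < ereal (16/15)"
    by simp
  also have "\<dots> \<le> inv_lam'' ?D 0"
    by (rule inv_lam''_compl_ball_point_ge)
  finally have "inv_lam' ?D 0 < inv_lam'' ?D 0" .
  with inv_lam_less show ?thesis
    using inv_lam_nonneg[of ?D 0] unfolding lam_def lam'_def lam''_def
    by (auto intro!: ereal_one_div_strict_antimono)
qed

end

theorem lemma3:
  assumes "CARD('n::finite) \<ge> 2"
  shows "\<exists>D :: (real^'n) set. is_domain D \<and> (\<exists>a b. a \<notin> D \<and> b \<notin> D \<and> a \<noteq> b) \<and>
           (\<exists>z\<in>D. lam'' D z < lam' D z \<and> lam' D z < lam D z)"
proof -
  have dim: "2 \<le> DIM(real^'n)"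
    using assms by simp
  then obtain c e :: "real^'n" where "c \<in> Basis" "e \<in> Basis" "c \<noteq> e"
    by (metis ex_card card_2_iff insert_subset)
  then have norm_c: "norm c = 1" and orth: "norm e = 1" "c \<bullet> e = 0"
    by (simp_all add: inner_not_same_Basis)
  have "c \<notin> compl_ball_point c" "2 *\<^sub>R c \<notin> compl_ball_point c" "c \<noteq> 2 *\<^sub>R c"
    using dist_double[OF norm_c] by (auto simp: compl_ball_point_def)
  then show ?thesis
    using is_domain_compl_ball_point[OF norm_c dim] zero_mem_compl_ball_point[OF norm_c]
      lam_strict_chain_compl_ball_point[OF norm_c orth] by blast
qed

end
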